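(* Let $P$ be a span program and $x$ an input, and let $S,T$ be positive-definite diagonal $|J|\times|J|$ matrices. Then $$\mathrm{wsize}_{S\sqrt{1+T}}(P,x)\le\mathrm{wsize}_S(P,x)\,(1+\|T\|),\qquad \mathrm{wsize}_{\sqrt{S^2+T^2}}(P,x)\le\mathrm{wsize}_S(P,x)+O(\|T\|^2),$$ where the constant in $O(\cdot)$ depends only on $P$. In particular, fix input complexities $U_i$ with grouped input complexities $\tilde U_j$. Let $\tilde U'_j>0$ ($j\in J$) satisfy $\tilde U'_j\lesssim\tilde U_j$ for all $j$, and let $\tilde U'=\sum_j\tilde U'_j|j\rangle\langle j|$. Then $$\mathrm{wsize}_{\sqrt{\tilde U'}}(P,x)\lesssim\mathrm{wsize}_{\sqrt{\tilde U}}(P,x)=\mathrm{wsize}(P,x).$$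
   Context: A span program $P$ has target $t=(1,0,\dots,0)\in\mathbb{C}^m$ and vectors $v_j$ ($j\in J$) labeled by literal sets $X_j$. Grouped input $j$ is true on $x$ iff all literals in $X_j$ are true. We set $f_P(x)=1$ iff $t$ is in the span of the true $v_j$. Let $\Pi=\sum_{j\text{ true}}|j\rangle\langle j|$ and $A=\sum_j|v_j\rangle\langle j|$. For positive-definite diagonal $S$: - if $f_P(x)=1$, $\mathrm{wsize}_S(P,x)=\min\{\|Sw\|^2:A\Pi w=t\}$; - if $f_P(x)=0$, $\mathrm{wsize}_S(P,x)=\min\{\|SA^\dagger w'\|^2:\langle t|w'\rangle=1,\ \Pi A^\dagger w'=0\}$. Input complexities are positive reals $U_i$, one for each literal occurrence $i\in I_j$ of $X_j$. Grouped input complexities are - $\tilde U_j=\max\{\sum_{i\in I_j}U_i,1\}$ if $j$ is true; - $\tilde U_j=(\sum_{i\in I_j\text{ false}}U_i^{-1})^{-1}$ otherwise. Set $\tilde U=\sum_j\tilde U_j|j\rangle\langle j|$ and $\mathrm{wsize}(P,x)=\mathrm{wsize}_{\sqrt{\tilde U}}(P,x)$. Notation $a\lesssim b$, relative to a real parameter $\lambda$ and the complexities $U_i$: there exist constants $c_1,c_2$ such that $a\le c_1+b(1+c_2|\lambda|\max_iU_i)$. In the conclusion, the constants may depend on those in the hypothesis and on $P$. *)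

theory Defs
  imports "HOL-Analysis.Analysis"
begin

text \<open>A span program over input variables of type 'i, with grouped inputs indexed by
  the finite type 'j.  Vectors live in C^m, represented as functions nat => complex of which
  only the coordinates k < m matter.  Each grouped input j carries a list of literals;
  a literal (k, b) stands for x_k if b = True and for the negation of x_k if b = False.
  Literal occurrences of X_j are indexed by positions i < length (sp_lits P j).\<close>
record ('i, 'j) span_program =
  sp_dim  :: nat
  sp_vec  :: "'j \<Rightarrow> nat \<Rightarrow> complex"
  sp_lits :: "'j \<Rightarrow> ('i \<times> bool) list"

definition sp_wf :: "('i, 'j) span_program \<Rightarrow> bool" where
  "sp_wf P \<longleftrightarrow> 0 < sp_dim P"

definition lit_true :: "('i \<Rightarrow> bool) \<Rightarrow> 'i \<times> bool \<Rightarrow> bool" where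
  "lit_true x l \<longleftrightarrow> x (fst l) = snd l"

definition grp_true :: "('i, 'j) span_program \<Rightarrow> ('i \<Rightarrow> bool) \<Rightarrow> 'j \<Rightarrow> bool" where
  "grp_true P x j \<longleftrightarrow> (\<forall>l \<in> set (sp_lits P j). lit_true x l)"

definition tvec :: "nat \<Rightarrow> complex" where
  "tvec k = (if k = 0 then 1 else 0)"

definition pos_witness :: "('i, 'j::finite) span_program \<Rightarrow> ('i \<Rightarrow> bool) \<Rightarrow> ('j \<Rightarrow> complex) \<Rightarrow> bool" where
  "pos_witness P x w \<longleftrightarrow>
     (\<forall>k < sp_dim P. (\<Sum>j\<in>UNIV. (if grp_true P x j then w j else 0) * sp_vec P j k) = tvec k)"

definition fP :: "('i, 'j::finite) span_program \<Rightarrow> ('i \<Rightarrow> bool) \<Rightarrow> bool" where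
  "fP P x \<longleftrightarrow> (\<exists>c. \<forall>k < sp_dim P.
       (\<Sum>j\<in>{j. grp_true P x j}. c j * sp_vec P j k) = tvec k)"

definition Adag :: "('i, 'j) span_program \<Rightarrow> (nat \<Rightarrow> complex) \<Rightarrow> 'j \<Rightarrow> complex" where
  "Adag P w' j = (\<Sum>k<sp_dim P. cnj (sp_vec P j k) * w' k)"

definition wsize :: "('i, 'j::finite) span_program \<Rightarrow> ('j \<Rightarrow> real) \<Rightarrow> ('i \<Rightarrow> bool) \<Rightarrow> real" where
  "wsize P S x =
    (if fP P x then
       Inf {(\<Sum>j\<in>UNIV. (S j * cmod (w j))\<^sup>2) | w. pos_witness P x w}
     else
       Inf {(\<Sum>j\<in>UNIV. (S j * cmod (Adag P w' j))\<^sup>2) | w'.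
              (\<Sum>k<sp_dim P. cnj (tvec k) * w' k) = 1 \<and>
              (\<forall>j. grp_true P x j \<longrightarrow> Adag P w' j = 0)})"

definition dnorm :: "('j::finite \<Rightarrow> real) \<Rightarrow> real" where
  "dnorm T = Max (range (\<lambda>j. \<bar>T j\<bar>))"

definition posdiag :: "('j \<Rightarrow> real) \<Rightarrow> bool" where
  "posdiag S \<longleftrightarrow> (\<forall>j. 0 < S j)"

text \<open>Grouped input complexities; U j i is the complexity of the i-th literal occurrence of X_j.\<close>
definition Utilde :: "('i, 'j) span_program \<Rightarrow> ('j \<Rightarrow> nat \<Rightarrow> real) \<Rightarrow> ('i \<Rightarrow> bool) \<Rightarrow> 'j \<Rightarrow> real" where
  "Utilde P U x j =
    (if grp_true P x j then max (\<Sum>i<length (sp_lits P j). U j i) 1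
     else inverse (\<Sum>i\<in>{i. i < length (sp_lits P j) \<and> \<not> lit_true x (sp_lits P j ! i)}.
                     inverse (U j i)))"

text \<open>max_i U_i over all literal occurrences (0 if there are none; the U_i are positive)\<close>
definition maxU :: "('i, 'j) span_program \<Rightarrow> ('j \<Rightarrow> nat \<Rightarrow> real) \<Rightarrow> real" where
  "maxU P U = Max (insert 0 {U j i | j i. i < length (sp_lits P j)})"

definition compl_pos :: "('i, 'j) span_program \<Rightarrow> ('j \<Rightarrow> nat \<Rightarrow> real) \<Rightarrow> bool" where
  "compl_pos P U \<longleftrightarrow> (\<forall>j i. i < length (sp_lits P j) \<longrightarrow> 0 < U j i)"

definition wsize_U :: "('i, 'j::finite) span_program \<Rightarrow> ('j \<Rightarrow> nat \<Rightarrow> real) \<Rightarrow> ('i \<Rightarrow> bool) \<Rightarrow> real" where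
  "wsize_U P U x = wsize P (\<lambda>j. sqrt (Utilde P U x j)) x"

end

theory Submission
  imports Defs
begin

text \<open>The witnesses of P on an input (positive witnesses, or the vectors Adag P w' of negative
  witnesses w') form a real affine subspace W of C^J, and wsize_S is the infimum of
  sum_j S_j^2 |w_j|^2 over W. The first inequality therefore holds witness by witness.
  For the second, every w in W dominates in modulus, coordinatewise, some w' in W whose entries
  are bounded by a constant depending only on P; using w' costs at most |J| C^2 ||T||^2.
  The bounded w' comes from the real and imaginary parts: a point y of a real affine subspace that
  is not determined by its zero pattern can be moved along a line in both directions until a
  coordinate vanishes, so y is a convex combination of two sign-conformal points of smaller
  support, and by induction y conformally dominates a point built from the finitely many points
  determined by their zero pattern. The final statement combines both inequalities with
  S^2 = U~ (1 + c2 |lambda| max U) and T^2 = max c1 0.\<close>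

section \<open>Bounded conformal minorants in affine sets\<close>

text \<open>Closure under real affine combinations, for sets of vectors represented as functions
  (HOL's affine needs a real_vector instance on the function space).\<close>
definition real_affine :: "('a \<Rightarrow> 'b::real_vector) set \<Rightarrow> bool" where
  "real_affine Y \<longleftrightarrow> (\<forall>y\<in>Y. \<forall>y'\<in>Y. \<forall>t::real. (\<lambda>i. y i + t *\<^sub>R (y' i - y i)) \<in> Y)"

definition conformal :: "('a \<Rightarrow> real) \<Rightarrow> ('a \<Rightarrow> real) \<Rightarrow> bool" where
  "conformal p y \<longleftrightarrow> (\<forall>i. 0 \<le> p i * y i \<and> (y i = 0 \<longrightarrow> p i = 0))"

definition conformal_le :: "('a \<Rightarrow> real) \<Rightarrow> ('a \<Rightarrow> real) \<Rightarrow> bool" where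
  "conformal_le p y \<longleftrightarrow> (\<forall>i. min 0 (y i) \<le> p i \<and> p i \<le> max 0 (y i))"

lemma conformal_le_refl: "conformal_le y y"
  unfolding conformal_le_def by simp

lemma conformal_le_trans: "conformal_le p q \<Longrightarrow> conformal_le q y \<Longrightarrow> conformal_le p y"
  unfolding conformal_le_def by (smt (verit))

lemma conformal_le_abs: "conformal_le p y \<Longrightarrow> \<bar>p i\<bar> \<le> \<bar>y i\<bar>"
  unfolding conformal_le_def by (smt (verit))

lemma conformal_le_of_conformal:
  assumes "conformal p y" "\<And>i. p i * y i \<le> (y i)\<^sup>2"
  shows "conformal_le p y"
  unfolding conformal_le_def
proof
  fix i
  have "0 \<le> p i * y i" "y i = 0 \<Longrightarrow> p i = 0" "p i * y i \<le> y i * y i"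
    using assms by (auto simp: conformal_def power2_eq_square)
  then show "min 0 (y i) \<le> p i \<and> p i \<le> max 0 (y i)"
    by (smt (verit) mult_le_cancel_right mult_less_0_iff zero_le_mult_iff)
qed

lemma conformal_le_convex_comb:
  assumes "conformal p y" "conformal q y" "conformal_le p' p" "conformal_le q' q"
    and "0 \<le> l" "l \<le> 1" and y: "\<And>i. y i = l * p i + (1 - l) * q i"
  shows "conformal_le (\<lambda>i. l * p' i + (1 - l) * q' i) y"
  unfolding conformal_le_def
proof
  fix i
  have "0 \<le> p i \<and> 0 \<le> q i \<or> p i \<le> 0 \<and> q i \<le> 0"
    using assms(1,2) unfolding conformal_def
    by (metis linorder_le_cases zero_le_mult_iff order_antisym)
  moreover have "min 0 (p i) \<le> p' i \<and> p' i \<le> max 0 (p i)" "min 0 (q i) \<le> q' i \<and> q' i \<le> max 0 (q i)"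
    using assms(3,4) by (auto simp: conformal_le_def)
  moreover have "\<And>a b. a \<le> b \<Longrightarrow> l * a \<le> l * b" "\<And>a b. a \<le> b \<Longrightarrow> (1 - l) * a \<le> (1 - l) * b"
    using assms(5,6) by (simp_all add: mult_left_mono)
  ultimately show "min 0 (y i) \<le> l * p' i + (1 - l) * q' i \<and> l * p' i + (1 - l) * q' i \<le> max 0 (y i)"
    unfolding y by (smt (verit) mult_nonneg_nonneg mult_nonneg_nonpos assms(5,6))
qed

lemma real_affine_comb:
  fixes Y :: "('a \<Rightarrow> real) set"
  assumes "real_affine Y" "p \<in> Y" "q \<in> Y"
  shows "(\<lambda>i. l * p i + (1 - l) * q i) \<in> Y"
proof -
  have "(\<lambda>i. q i + l *\<^sub>R (p i - q i)) \<in> Y"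
    using assms unfolding real_affine_def by blast
  moreover have "(\<lambda>i. q i + l *\<^sub>R (p i - q i)) = (\<lambda>i. l * p i + (1 - l) * q i)"
    by (auto simp: algebra_simps)
  ultimately show ?thesis by simp
qed

lemma conformal_line:
  assumes "0 \<le> t" "\<And>i. y i = 0 \<Longrightarrow> z i = 0" "\<And>i. y i * z i < 0 \<Longrightarrow> t \<le> - y i / z i"
  shows "conformal (\<lambda>i. y i + t * z i) y"
  unfolding conformal_def
proof (intro allI conjI impI)
  fix i
  show "0 \<le> (y i + t * z i) * y i"
  proof (cases "y i * z i < 0")
    case True
    then have "t * (- (y i * z i)) \<le> - y i / z i * (- (y i * z i))"
      using assms(3) by (intro mult_right_mono) auto
    also have "\<dots> = (y i)\<^sup>2"
      using True by (auto simp: power2_eq_square)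
    finally show ?thesis by (simp add: algebra_simps power2_eq_square)
  next
    case False
    then show ?thesis using assms(1) by (simp add: algebra_simps)
  qed
  show "y i = 0 \<Longrightarrow> y i + t * z i = 0" using assms(2) by simp
qed

lemma line_first_zero:
  fixes y z :: "'a::finite \<Rightarrow> real"
  assumes z: "\<And>i. y i = 0 \<Longrightarrow> z i = 0" and "\<exists>i. y i * z i < 0"
  obtains t where "0 < t" "conformal (\<lambda>i. y i + t * z i) y"
    "card {i. y i + t * z i \<noteq> 0} < card {i. y i \<noteq> 0}"
proof -
  define N where "N = {i. y i * z i < 0}"
  define t where "t = Min ((\<lambda>i. - y i / z i) ` N)"
  have "N \<noteq> {}" using assms(2) by (auto simp: N_def)
  then have "t \<in> (\<lambda>i. - y i / z i) ` N"
    unfolding t_def by (intro Min_in) auto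
  then obtain i0 where i0: "y i0 * z i0 < 0" "t = - y i0 / z i0"
    by (auto simp: N_def)
  have t_le: "t \<le> - y i / z i" if "y i * z i < 0" for i
    unfolding t_def using that by (intro Min_le) (auto simp: N_def)
  have "0 < t" using i0 by (auto simp: mult_less_0_iff divide_less_0_iff zero_less_divide_iff)
  moreover have "conformal (\<lambda>i. y i + t * z i) y"
    using \<open>0 < t\<close> z t_le by (intro conformal_line) auto
  moreover have "card {i. y i + t * z i \<noteq> 0} < card {i. y i \<noteq> 0}"
  proof (rule psubset_card_mono)
    have "y i0 + t * z i0 = 0" "y i0 \<noteq> 0" using i0 by auto
    then show "{i. y i + t * z i \<noteq> 0} \<subset> {i. y i \<noteq> 0}" using z by fastforce
  qed simp
  ultimately show ?thesis using that by blast
qed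

lemma real_affine_line_within_support:
  fixes Y :: "('a \<Rightarrow> real) set"
  assumes "real_affine Y" "y \<in> Y" "y2 \<in> Y" "y2 \<noteq> y" and supp: "\<And>i. y i = 0 \<Longrightarrow> y2 i = 0"
  obtains z where "\<And>t. (\<lambda>i. y i + t * z i) \<in> Y" "\<And>i. y i = 0 \<Longrightarrow> z i = 0" "\<exists>i. y i * z i < 0"
proof -
  have line: "(\<lambda>i. y i + t * (y2 i - y i)) \<in> Y" for t
    using assms(1-3) unfolding real_affine_def by auto
  obtain i0 where "y2 i0 \<noteq> y i0" using \<open>y2 \<noteq> y\<close> by blast
  then have nz: "y i0 * (y2 i0 - y i0) \<noteq> 0" using supp by auto
  show ?thesis
  proof (cases "y i0 * (y2 i0 - y i0) < 0")
    case True
    then show ?thesis using that[of "\<lambda>i. y2 i - y i"] line supp by auto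
  next
    case False
    have "(\<lambda>i. y i + t * (y i - y2 i)) \<in> Y" for t
      using line[of "- t"] by (simp add: algebra_simps)
    moreover have "y i0 * (y i0 - y2 i0) < 0"
      using False nz
      by (metis minus_diff_eq mult_minus_right neg_less_0_iff_less linorder_neqE_linordered_idom)
    ultimately show ?thesis using that[of "\<lambda>i. y i - y2 i"] supp by auto
  qed
qed

lemma conformal_bounded_step:
  fixes Y :: "('a::finite \<Rightarrow> real) set"
  assumes aff: "real_affine Y" and "y \<in> Y" "y2 \<in> Y" "y2 \<noteq> y" "\<And>i. y i = 0 \<Longrightarrow> y2 i = 0"
    and IH: "\<And>p. p \<in> Y \<Longrightarrow> card {i. p i \<noteq> 0} < card {i. y i \<noteq> 0} \<Longrightarrow>
               \<exists>p'\<in>Y. conformal_le p' p \<and> (\<forall>i. \<bar>p' i\<bar> \<le> C)"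
  shows "\<exists>y'\<in>Y. conformal_le y' y \<and> (\<forall>i. \<bar>y' i\<bar> \<le> C)"
proof -
  obtain z where z: "\<And>t. (\<lambda>i. y i + t * z i) \<in> Y" "\<And>i. y i = 0 \<Longrightarrow> z i = 0" "\<exists>i. y i * z i < 0"
    using real_affine_line_within_support[OF assms(1-5)] by blast
  obtain t where t: "0 < t" "conformal (\<lambda>i. y i + t * z i) y"
    "card {i. y i + t * z i \<noteq> 0} < card {i. y i \<noteq> 0}"
    using line_first_zero[OF z(2,3)] by blast
  define p where "p = (\<lambda>i. y i + t * z i)"
  obtain p' where p': "p' \<in> Y" "conformal_le p' p" "\<forall>i. \<bar>p' i\<bar> \<le> C"
    using IH[of p] z(1) t(3) unfolding p_def by blast
  show ?thesis
  proof (cases "\<forall>i. y i * z i \<le> 0")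
    case True
    have "p i * y i \<le> (y i)\<^sup>2" for i
      using True \<open>0 < t\<close> mult_nonneg_nonpos[of t "y i * z i"]
      by (simp add: p_def algebra_simps power2_eq_square)
    then have "conformal_le p y"
      using t(2) unfolding p_def by (intro conformal_le_of_conformal) auto
    then show ?thesis using p' conformal_le_trans by blast
  next
    case False
    \<comment> \<open>y is then strictly between p and a point q on the other side of the line\<close>
    then have "\<exists>i. y i * - z i < 0" by (simp add: not_le)
    then obtain s where s: "0 < s" "conformal (\<lambda>i. y i + s * - z i) y"
      "card {i. y i + s * - z i \<noteq> 0} < card {i. y i \<noteq> 0}"
      using line_first_zero[of y "\<lambda>i. - z i"] z(2) by auto
    define q where "q = (\<lambda>i. y i + s * - z i)"
    obtain q' where q': "q' \<in> Y" "conformal_le q' q" "\<forall>i. \<bar>q' i\<bar> \<le> C"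
      using IH[of q] z(1)[of "- s"] s(3) unfolding q_def by auto
    define l where "l = s / (t + s)"
    have l: "0 \<le> l" "l \<le> 1" using \<open>0 < t\<close> \<open>0 < s\<close> by (auto simp: l_def)
    have "y i = l * p i + (1 - l) * q i" for i
    proof -
      have "1 - l = t / (t + s)" using \<open>0 < t\<close> \<open>0 < s\<close> by (simp add: l_def field_simps)
      then have "l * p i + (1 - l) * q i = (s * p i + t * q i) / (t + s)"
        by (simp add: l_def add_divide_distrib)
      also have "s * p i + t * q i = (t + s) * y i"
        by (simp add: p_def q_def algebra_simps)
      finally show ?thesis using \<open>0 < t\<close> \<open>0 < s\<close> by simp
    qed
    then have "conformal_le (\<lambda>i. l * p' i + (1 - l) * q' i) y"
      using t(2) s(2) p'(2) q'(2) l unfolding p_def q_def by (intro conformal_le_convex_comb)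
    moreover have "\<bar>l * p' i + (1 - l) * q' i\<bar> \<le> C" for i
    proof -
      have "l * p' i + (1 - l) * q' i \<le> C" "l * - p' i + (1 - l) * - q' i \<le> C"
        using l p'(3) q'(3) by (intro convex_bound_le; force simp: abs_le_iff)+
      then show ?thesis by linarith
    qed
    ultimately show ?thesis using real_affine_comb[OF aff p'(1) q'(1)] by blast
  qed
qed

lemma real_affine_conformal_bounded:
  fixes Y :: "('a::finite \<Rightarrow> real) set"
  assumes aff: "real_affine Y"
  shows "\<exists>C. \<forall>y\<in>Y. \<exists>y'\<in>Y. conformal_le y' y \<and> (\<forall>i. \<bar>y' i\<bar> \<le> C)"
proof -
  define B where "B = {b\<in>Y. \<forall>b'\<in>Y. (\<forall>i. b i = 0 \<longrightarrow> b' i = 0) \<longrightarrow> b' = b}"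
  have "inj_on (\<lambda>b. {i. b i = 0}) B"
    by (rule inj_onI) (auto simp: B_def)
  then have "finite B" by (rule finite_imageD[rotated]) simp
  define C where "C = Max (insert 0 ((\<lambda>(b, i). \<bar>b i\<bar>) ` (B \<times> UNIV)))"
  have C: "\<bar>b i\<bar> \<le> C" if "b \<in> B" for b i
    unfolding C_def using \<open>finite B\<close> that by (intro Max_ge) auto
  have "\<exists>y'\<in>Y. conformal_le y' y \<and> (\<forall>i. \<bar>y' i\<bar> \<le> C)" if "y \<in> Y" "card {i. y i \<noteq> 0} = n" for y n
    using that
  proof (induction n arbitrary: y rule: less_induct)
    case (less n)
    show ?case
    proof (cases "y \<in> B")
      case True
      then show ?thesis using less.prems C conformal_le_refl by blast
    next
      case False
      then obtain y2 where "y2 \<in> Y" "y2 \<noteq> y" "\<And>i. y i = 0 \<Longrightarrow> y2 i = 0"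
        using less.prems unfolding B_def by blast
      then show ?thesis
        using conformal_bounded_step[OF aff \<open>y \<in> Y\<close>] less by blast
    qed
  qed
  then show ?thesis by blast
qed

definition re_im :: "('j \<Rightarrow> complex) \<Rightarrow> 'j \<times> bool \<Rightarrow> real" where
  "re_im w = (\<lambda>(j, b). if b then Re (w j) else Im (w j))"

lemma real_affine_re_im_image:
  assumes "real_affine W"
  shows "real_affine (re_im ` W)"
  unfolding real_affine_def
proof (intro ballI allI)
  fix y y' t assume "y \<in> re_im ` W" "y' \<in> re_im ` W"
  then obtain w w' where "w \<in> W" "w' \<in> W" "y = re_im w" "y' = re_im w'" by blast
  moreover have "(\<lambda>i. y i + t *\<^sub>R (y' i - y i)) = re_im (\<lambda>j. w j + t *\<^sub>R (w' j - w j))"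
    using calculation(3,4) by (auto simp: re_im_def fun_eq_iff)
  ultimately show "(\<lambda>i. y i + t *\<^sub>R (y' i - y i)) \<in> re_im ` W"
    using assms unfolding real_affine_def by blast
qed

lemma cmod_le_of_re_im:
  assumes "\<bar>Re z\<bar> \<le> \<bar>Re w\<bar>" "\<bar>Im z\<bar> \<le> \<bar>Im w\<bar>"
  shows "cmod z \<le> cmod w"
  unfolding cmod_def using assms
  by (intro real_sqrt_le_mono add_mono) (simp_all add: abs_le_square_iff)

lemma real_affine_cmod_bounded:
  fixes W :: "('j::finite \<Rightarrow> complex) set"
  assumes "real_affine W"
  shows "\<exists>C. \<forall>w\<in>W. \<exists>w'\<in>W. \<forall>j. cmod (w' j) \<le> cmod (w j) \<and> cmod (w' j) \<le> C"
proof -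
  obtain C where C: "\<forall>y\<in>re_im ` W. \<exists>y'\<in>re_im ` W. conformal_le y' y \<and> (\<forall>i. \<bar>y' i\<bar> \<le> C)"
    using real_affine_conformal_bounded[OF real_affine_re_im_image[OF assms]] by blast
  have "\<exists>w'\<in>W. \<forall>j. cmod (w' j) \<le> cmod (w j) \<and> cmod (w' j) \<le> 2 * C" if "w \<in> W" for w
  proof -
    obtain w' where w': "w' \<in> W" "conformal_le (re_im w') (re_im w)" "\<forall>i. \<bar>re_im w' i\<bar> \<le> C"
      using C \<open>w \<in> W\<close> by blast
    have "cmod (w' j) \<le> cmod (w j) \<and> cmod (w' j) \<le> 2 * C" for j
    proof -
      have "\<bar>Re (w' j)\<bar> \<le> \<bar>Re (w j)\<bar>" "\<bar>Im (w' j)\<bar> \<le> \<bar>Im (w j)\<bar>"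
        using conformal_le_abs[OF w'(2), of "(j, True)"] conformal_le_abs[OF w'(2), of "(j, False)"]
        by (simp_all add: re_im_def)
      moreover have "\<bar>Re (w' j)\<bar> \<le> C" "\<bar>Im (w' j)\<bar> \<le> C"
        using w'(3)[rule_format, of "(j, True)"] w'(3)[rule_format, of "(j, False)"]
        by (simp_all add: re_im_def)
      ultimately show ?thesis using cmod_le_of_re_im cmod_le[of "w' j"] by fastforce
    qed
    then show ?thesis using w'(1) by blast
  qed
  then show ?thesis by blast
qed

section \<open>Witness sets of a span program\<close>

lemma span_or_separating_functional:
  fixes u :: "'j \<Rightarrow> nat \<Rightarrow> 'a::field"
  assumes "finite G"
  shows "(\<exists>c. \<forall>k<m. (\<Sum>j\<in>G. c j * u j k) = t k)
       \<or> (\<exists>a. (\<Sum>k<m. a k * t k) = 1 \<and> (\<forall>j\<in>G. (\<Sum>k<m. a k * u j k) = 0))"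
  using assms
proof (induction G arbitrary: t rule: finite_induct)
  case empty
  show ?case
  proof (cases "\<forall>k<m. t k = 0")
    case False
    then obtain k0 where k0: "k0 < m" "t k0 \<noteq> 0" by blast
    have "(\<Sum>k<m. (if k = k0 then 1 / t k0 else 0) * t k) = (\<Sum>k<m. if k = k0 then 1 / t k0 * t k else 0)"
      by (rule sum.cong) auto
    also have "\<dots> = 1" using k0 by simp
    finally have "(\<Sum>k<m. (if k = k0 then 1 / t k0 else 0) * t k) = 1" .
    then show ?thesis by (intro disjI2 exI[of _ "\<lambda>k. if k = k0 then 1 / t k0 else 0"]) simp
  qed auto
next
  case (insert g G)
  have sum_insert: "(\<Sum>j\<in>insert g G. c j * u j k) = c g * u g k + (\<Sum>j\<in>G. c j * u j k)" for c k
    using insert.hyps by simp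
  have sum_upd: "(\<Sum>j\<in>G. (c(g := d)) j * u j k) = (\<Sum>j\<in>G. c j * u j k)" for c d k
    using insert.hyps by (intro sum.cong) auto
  show ?case
  proof (cases "\<exists>c. \<forall>k<m. (\<Sum>j\<in>G. c j * u j k) = t k")
    case True
    then obtain c where "\<forall>k<m. (\<Sum>j\<in>G. c j * u j k) = t k" by blast
    then have "\<forall>k<m. (\<Sum>j\<in>insert g G. (c(g := 0)) j * u j k) = t k"
      by (simp add: sum_insert sum_upd fun_upd_same del: fun_upd_apply)
    then show ?thesis by blast
  next
    case False
    then obtain a where a: "(\<Sum>k<m. a k * t k) = 1" "\<forall>j\<in>G. (\<Sum>k<m. a k * u j k) = 0"
      using insert.IH by blast
    define \<alpha> where "\<alpha> = (\<Sum>k<m. a k * u g k)"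
    show ?thesis
    proof (cases "\<alpha> = 0")
      case True
      then show ?thesis using a by (auto simp: \<alpha>_def)
    next
      case False
      \<comment> \<open>A functional separating t - u g / \<alpha> from G separates t from insert g G once
        corrected by the multiple of a that cancels its value at u g.\<close>
      define t' where "t' = (\<lambda>k. t k - u g k / \<alpha>)"
      consider c where "\<forall>k<m. (\<Sum>j\<in>G. c j * u j k) = t' k"
        | b where "(\<Sum>k<m. b k * t' k) = 1" "\<forall>j\<in>G. (\<Sum>k<m. b k * u j k) = 0"
        using insert.IH[of t'] by blast
      then show ?thesis
      proof cases
        case (1 c)
        then have "\<forall>k<m. (\<Sum>j\<in>insert g G. (c(g := 1 / \<alpha>)) j * u j k) = t k"
          by (simp add: sum_insert sum_upd t'_def fun_upd_same del: fun_upd_apply)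
        then show ?thesis by blast
      next
        case (2 b)
        define \<beta> where "\<beta> = (\<Sum>k<m. b k * u g k)"
        define a' where "a' = (\<lambda>k. b k - \<beta> / \<alpha> * a k)"
        have a'_apply: "(\<Sum>k<m. a' k * v k) = (\<Sum>k<m. b k * v k) - \<beta> / \<alpha> * (\<Sum>k<m. a k * v k)" for v
          unfolding a'_def by (simp add: algebra_simps sum_subtractf sum_distrib_left)
        have "(\<Sum>k<m. b k * t k) = 1 + \<beta> / \<alpha>"
          using 2(1) by (simp add: t'_def \<beta>_def algebra_simps sum_subtractf sum_divide_distrib)
        then have "(\<Sum>k<m. a' k * t k) = 1" using a'_apply[of t] a(1) by simp
        moreover have "\<forall>j\<in>insert g G. (\<Sum>k<m. a' k * u j k) = 0"
          using a'_apply a(2) 2(2) False by (auto simp: \<alpha>_def[symmetric] \<beta>_def[symmetric])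
        ultimately show ?thesis by blast
      qed
    qed
  qed
qed

text \<open>They depend on the input only through the set G of true grouped inputs,
  of which there are finitely many.\<close>
definition witness_set :: "('i, 'j::finite) span_program \<Rightarrow> 'j set \<Rightarrow> ('j \<Rightarrow> complex) set" where
  "witness_set P G =
    (if \<exists>c. \<forall>k < sp_dim P. (\<Sum>j\<in>G. c j * sp_vec P j k) = tvec k
     then {w. \<forall>k < sp_dim P. (\<Sum>j\<in>UNIV. (if j \<in> G then w j else 0) * sp_vec P j k) = tvec k}
     else Adag P ` {w'. (\<Sum>k<sp_dim P. cnj (tvec k) * w' k) = 1 \<and> (\<forall>j\<in>G. Adag P w' j = 0)})"

definition wnorm_sq :: "('j::finite \<Rightarrow> real) \<Rightarrow> ('j \<Rightarrow> complex) \<Rightarrow> real" where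
  "wnorm_sq S w = (\<Sum>j\<in>UNIV. (S j * cmod (w j))\<^sup>2)"

lemma wsize_eq_Inf_witness_set:
  "wsize P S x = Inf (wnorm_sq S ` witness_set P {j. grp_true P x j})"
proof -
  have "fP P x \<longleftrightarrow> (\<exists>c. \<forall>k < sp_dim P. (\<Sum>j\<in>{j. grp_true P x j}. c j * sp_vec P j k) = tvec k)"
    unfolding fP_def by simp
  then show ?thesis
    unfolding wsize_def witness_set_def wnorm_sq_def pos_witness_def
    by (auto simp: image_def intro!: arg_cong[where f = Inf])
qed

lemma Adag_affine:
  "Adag P (\<lambda>k. u k + t *\<^sub>R (u' k - u k)) j = Adag P u j + t *\<^sub>R (Adag P u' j - Adag P u j)"
  unfolding Adag_def scaleR_conv_of_real
  by (simp add: algebra_simps sum.distrib sum_subtractf sum_distrib_left)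

lemma real_affine_witness_set: "real_affine (witness_set P G)"
proof (cases "\<exists>c. \<forall>k < sp_dim P. (\<Sum>j\<in>G. c j * sp_vec P j k) = tvec k")
  case True
  have "(\<Sum>j\<in>UNIV. (if j \<in> G then w j + t *\<^sub>R (w' j - w j) else 0) * sp_vec P j k)
      = (\<Sum>j\<in>UNIV. (if j \<in> G then w j else 0) * sp_vec P j k)
        + t *\<^sub>R ((\<Sum>j\<in>UNIV. (if j \<in> G then w' j else 0) * sp_vec P j k)
                - (\<Sum>j\<in>UNIV. (if j \<in> G then w j else 0) * sp_vec P j k))"
    for w w' :: "'a \<Rightarrow> complex" and t k
  proof -
    have "(if j \<in> G then w j + t *\<^sub>R (w' j - w j) else 0) * sp_vec P j k
        = (if j \<in> G then w j else 0) * sp_vec P j k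
          + t *\<^sub>R ((if j \<in> G then w' j else 0) * sp_vec P j k - (if j \<in> G then w j else 0) * sp_vec P j k)"
      for j by (simp add: algebra_simps)
    then show ?thesis
      by (simp add: sum.distrib sum_subtractf scaleR_sum_right scaleR_right_diff_distrib)
  qed
  then show ?thesis
    using True by (auto simp: real_affine_def witness_set_def)
next
  case False
  define N where "N = {w'. (\<Sum>k<sp_dim P. cnj (tvec k) * w' k) = 1 \<and> (\<forall>j\<in>G. Adag P w' j = 0)}"
  have N_affine: "(\<lambda>k. u k + t *\<^sub>R (u' k - u k)) \<in> N" if "u \<in> N" "u' \<in> N" for u u' t
  proof -
    have "(\<Sum>k<sp_dim P. cnj (tvec k) * (u k + t *\<^sub>R (u' k - u k)))
        = (\<Sum>k<sp_dim P. cnj (tvec k) * u k)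
          + t *\<^sub>R ((\<Sum>k<sp_dim P. cnj (tvec k) * u' k) - (\<Sum>k<sp_dim P. cnj (tvec k) * u k))"
      unfolding scaleR_conv_of_real
      by (simp add: algebra_simps sum.distrib sum_subtractf sum_distrib_left)
    then show ?thesis using that by (simp add: N_def Adag_affine)
  qed
  have "(\<lambda>j. w j + t *\<^sub>R (w' j - w j)) \<in> Adag P ` N"
    if ww': "w \<in> Adag P ` N" "w' \<in> Adag P ` N" for w w' t
  proof -
    obtain u u' where "u \<in> N" "u' \<in> N" "w = Adag P u" "w' = Adag P u'" using ww' by blast
    then show ?thesis
      by (intro image_eqI[of _ _ "\<lambda>k. u k + t *\<^sub>R (u' k - u k)"]) (auto simp: fun_eq_iff Adag_affine N_affine)
  qed
  then show ?thesis
    unfolding real_affine_def witness_set_def if_not_P[OF False] N_def[symmetric] by blast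
qed

lemma witness_set_nonempty: "witness_set P G \<noteq> {}"
proof (cases "\<exists>c. \<forall>k < sp_dim P. (\<Sum>j\<in>G. c j * sp_vec P j k) = tvec k")
  case True
  then obtain c where c: "\<forall>k < sp_dim P. (\<Sum>j\<in>G. c j * sp_vec P j k) = tvec k" by blast
  have "(\<Sum>j\<in>UNIV. (if j \<in> G then c j else 0) * sp_vec P j k) = (\<Sum>j\<in>G. c j * sp_vec P j k)" for k
    by (simp add: if_distrib[of "\<lambda>a. a * _"] sum.If_cases cong: if_cong)
  then have "c \<in> witness_set P G" using True c by (simp add: witness_set_def)
  then show ?thesis by blast
next
  case False
  then obtain a where a: "(\<Sum>k<sp_dim P. a k * tvec k) = 1" "\<forall>j\<in>G. (\<Sum>k<sp_dim P. a k * sp_vec P j k) = 0"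
    using span_or_separating_functional[of G "sp_dim P" "sp_vec P" tvec] by auto
  define w' where "w' = (\<lambda>k. cnj (a k))"
  have "(\<Sum>k<sp_dim P. cnj (tvec k) * w' k) = cnj (\<Sum>k<sp_dim P. a k * tvec k)"
    unfolding w'_def by (simp add: tvec_def mult.commute)
  moreover have "Adag P w' j = 0" if "j \<in> G" for j
  proof -
    have "Adag P w' j = cnj (\<Sum>k<sp_dim P. a k * sp_vec P j k)"
      unfolding Adag_def w'_def by (simp add: mult.commute)
    then show ?thesis using a(2) that by simp
  qed
  ultimately have "w' \<in> {w'. (\<Sum>k<sp_dim P. cnj (tvec k) * w' k) = 1 \<and> (\<forall>j\<in>G. Adag P w' j = 0)}"
    using a by simp
  then have "Adag P w' \<in> witness_set P G"
    unfolding witness_set_def if_not_P[OF False] by blast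
  then show ?thesis by blast
qed

lemma witness_set_cmod_bounded:
  fixes P :: "('i, 'j::finite) span_program"
  obtains C where "\<And>G w. w \<in> witness_set P G \<Longrightarrow>
    \<exists>w'\<in>witness_set P G. \<forall>j. cmod (w' j) \<le> cmod (w j) \<and> cmod (w' j) \<le> C"
proof -
  have "\<forall>G. \<exists>C. \<forall>w\<in>witness_set P G. \<exists>w'\<in>witness_set P G.
      \<forall>j. cmod (w' j) \<le> cmod (w j) \<and> cmod (w' j) \<le> C"
    using real_affine_cmod_bounded[OF real_affine_witness_set] by blast
  then obtain f where f: "\<And>G. \<forall>w\<in>witness_set P G. \<exists>w'\<in>witness_set P G.
      \<forall>j. cmod (w' j) \<le> cmod (w j) \<and> cmod (w' j) \<le> f G"
    by metis
  show ?thesis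
  proof (rule that)
    fix G w assume "w \<in> witness_set P G"
    then obtain w' where "w' \<in> witness_set P G" "\<forall>j. cmod (w' j) \<le> cmod (w j) \<and> cmod (w' j) \<le> f G"
      using f by blast
    moreover have "f G \<le> Max (range f)" by (intro Max_ge) auto
    ultimately show "\<exists>w'\<in>witness_set P G. \<forall>j. cmod (w' j) \<le> cmod (w j) \<and> cmod (w' j) \<le> Max (range f)"
      by (meson order_trans)
  qed
qed

section \<open>Witness size under changes of the weights\<close>

lemma Inf_image_le_mult_add:
  fixes f g :: "'a \<Rightarrow> real"
  assumes "A \<noteq> {}" and "\<And>a. a \<in> A \<Longrightarrow> 0 \<le> f a" and "0 \<le> k"
    and le: "\<And>a. a \<in> A \<Longrightarrow> \<exists>b\<in>A. f b \<le> k * g a + c"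
  shows "Inf (f ` A) \<le> k * Inf (g ` A) + c"
proof -
  have Inf_le: "Inf (f ` A) \<le> k * g a + c" if a: "a \<in> A" for a
  proof -
    obtain b where "b \<in> A" "f b \<le> k * g a + c" using le[OF a] by blast
    moreover have "Inf (f ` A) \<le> f b"
      using assms(2) \<open>b \<in> A\<close> by (intro cInf_lower bdd_belowI[of _ 0]) auto
    ultimately show ?thesis by linarith
  qed
  show ?thesis
  proof (cases "k = 0")
    case True
    then show ?thesis using Inf_le \<open>A \<noteq> {}\<close> by auto
  next
    case False
    with \<open>0 \<le> k\<close> have "0 < k" by simp
    then have "(Inf (f ` A) - c) / k \<le> Inf (g ` A)"
      using \<open>A \<noteq> {}\<close> Inf_le
      by (intro cInf_greatest) (auto simp: pos_divide_le_eq algebra_simps)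
    then show ?thesis using \<open>0 < k\<close> by (simp add: pos_divide_le_eq mult.commute)
  qed
qed

lemma wsize_le_of_witnesses:
  assumes "0 \<le> k"
    and "\<And>w. w \<in> witness_set P {j. grp_true P x j} \<Longrightarrow>
           \<exists>w'\<in>witness_set P {j. grp_true P x j}. wnorm_sq S' w' \<le> k * wnorm_sq S w + c"
  shows "wsize P S' x \<le> k * wsize P S x + c"
  unfolding wsize_eq_Inf_witness_set
  using assms witness_set_nonempty
  by (intro Inf_image_le_mult_add) (auto simp: wnorm_sq_def sum_nonneg)

lemma wsize_mono:
  assumes "\<And>j. 0 \<le> S j \<and> S j \<le> S' j"
  shows "wsize P S x \<le> wsize P S' x"
proof -
  have "wnorm_sq S w \<le> 1 * wnorm_sq S' w + 0" for w
    unfolding wnorm_sq_def using assms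
    by (simp, intro sum_mono power_mono mult_right_mono) auto
  then show ?thesis using wsize_le_of_witnesses[of 1 P x S S' 0] by auto
qed

lemma dnorm_ge: "\<bar>T j\<bar> \<le> dnorm T"
  unfolding dnorm_def by (rule Max_ge) auto

lemma dnorm_const: "dnorm (\<lambda>j::'j::finite. c) = \<bar>c\<bar>"
  unfolding dnorm_def by (simp add: image_constant_conv)

lemma wsize_mult_sqrt_le:
  assumes "\<And>j. 0 \<le> T j"
  shows "wsize P (\<lambda>j. S j * sqrt (1 + T j)) x \<le> wsize P S x * (1 + dnorm T)"
proof -
  have "wnorm_sq (\<lambda>j. S j * sqrt (1 + T j)) w = (\<Sum>j\<in>UNIV. (S j * cmod (w j))\<^sup>2 * (1 + T j))" for w
    unfolding wnorm_sq_def using assms by (intro sum.cong) (auto simp: power_mult_distrib)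
  also have "\<dots> w \<le> (1 + dnorm T) * wnorm_sq S w + 0" for w
  proof -
    have "1 + T j \<le> 1 + dnorm T" for j using dnorm_ge[of T j] by simp
    then show ?thesis
      unfolding wnorm_sq_def sum_distrib_left
      by (simp, intro sum_mono) (simp add: mult.commute[of "1 + dnorm T"] mult_left_mono)
  qed
  finally show ?thesis
    using wsize_le_of_witnesses[of "1 + dnorm T" P x "\<lambda>j. S j * sqrt (1 + T j)" S 0]
      assms dnorm_ge[of T] by (fastforce simp: mult.commute)
qed

lemma wsize_sqrt_add_sq_le:
  fixes P :: "('i, 'j::finite) span_program"
  obtains C where "\<And>x S T. wsize P (\<lambda>j. sqrt ((S j)\<^sup>2 + (T j)\<^sup>2)) x \<le> wsize P S x + C * (dnorm T)\<^sup>2"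
proof -
  obtain B where B: "\<And>G w. w \<in> witness_set P G \<Longrightarrow>
      \<exists>w'\<in>witness_set P G. \<forall>j. cmod (w' j) \<le> cmod (w j) \<and> cmod (w' j) \<le> B"
    using witness_set_cmod_bounded by blast
  have "wsize P (\<lambda>j. sqrt ((S j)\<^sup>2 + (T j)\<^sup>2)) x \<le> 1 * wsize P S x + CARD('j) * B\<^sup>2 * (dnorm T)\<^sup>2"
    for x S T
  proof (rule wsize_le_of_witnesses)
    fix w assume "w \<in> witness_set P {j. grp_true P x j}"
    then obtain w' where w': "w' \<in> witness_set P {j. grp_true P x j}"
      "\<forall>j. cmod (w' j) \<le> cmod (w j) \<and> cmod (w' j) \<le> B"
      using B by blast
    have "wnorm_sq (\<lambda>j. sqrt ((S j)\<^sup>2 + (T j)\<^sup>2)) w'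
        = (\<Sum>j\<in>UNIV. (S j * cmod (w' j))\<^sup>2 + (T j)\<^sup>2 * (cmod (w' j))\<^sup>2)"
      unfolding wnorm_sq_def by (intro sum.cong) (auto simp: algebra_simps)
    also have "\<dots> \<le> (\<Sum>j\<in>UNIV. (S j * cmod (w j))\<^sup>2 + (dnorm T)\<^sup>2 * B\<^sup>2)"
    proof (intro sum_mono add_mono)
      fix j
      show "(S j * cmod (w' j))\<^sup>2 \<le> (S j * cmod (w j))\<^sup>2"
        using w'(2) by (simp add: power_mult_distrib mult_left_mono power_mono)
      have "(T j)\<^sup>2 \<le> (dnorm T)\<^sup>2"
        using dnorm_ge[of T j] by (metis abs_ge_zero power2_abs power_mono)
      moreover have "(cmod (w' j))\<^sup>2 \<le> B\<^sup>2" using w'(2) by (intro power_mono) auto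
      ultimately show "(T j)\<^sup>2 * (cmod (w' j))\<^sup>2 \<le> (dnorm T)\<^sup>2 * B\<^sup>2"
        by (intro mult_mono) auto
    qed
    also have "\<dots> = 1 * wnorm_sq S w + CARD('j) * B\<^sup>2 * (dnorm T)\<^sup>2"
      unfolding wnorm_sq_def by (simp add: sum.distrib algebra_simps)
    finally show "\<exists>w'\<in>witness_set P {j. grp_true P x j}. wnorm_sq (\<lambda>j. sqrt ((S j)\<^sup>2 + (T j)\<^sup>2)) w'
        \<le> 1 * wnorm_sq S w + CARD('j) * B\<^sup>2 * (dnorm T)\<^sup>2"
      using w'(1) by blast
  qed simp
  then show ?thesis using that[of "CARD('j) * B\<^sup>2"] by simp
qed

lemma Utilde_nonneg:
  assumes "compl_pos P U"
  shows "0 \<le> Utilde P U x j"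
  using assms unfolding Utilde_def compl_pos_def
  by (auto intro!: sum_nonneg simp: less_imp_le)

lemma maxU_nonneg:
  fixes P :: "('i, 'j::finite) span_program"
  shows "0 \<le> maxU P U"
proof -
  have "{U j i | j i. i < length (sp_lits P j)} \<subseteq> (\<Union>j. U j ` {..<length (sp_lits P j)})" by auto
  then have "finite {U j i | j i. i < length (sp_lits P j)}"
    by (rule finite_subset) simp
  then show ?thesis unfolding maxU_def by (intro Max_ge) auto
qed

lemma wsize_sqrt_le_affine_bound:
  fixes P :: "('i, 'j::finite) span_program"
  obtains C where "\<And>x V U' a b. (\<And>j. 0 \<le> V j) \<Longrightarrow> 0 \<le> a \<Longrightarrow> 0 \<le> b \<Longrightarrow> (\<And>j. 0 \<le> U' j) \<Longrightarrow>
    (\<And>j. U' j \<le> a + V j * (1 + b)) \<Longrightarrow>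
    wsize P (\<lambda>j. sqrt (U' j)) x \<le> C * a + wsize P (\<lambda>j. sqrt (V j)) x * (1 + b)"
proof -
  obtain C where C: "\<And>x S T. wsize P (\<lambda>j. sqrt ((S j)\<^sup>2 + (T j)\<^sup>2)) x \<le> wsize P S x + C * (dnorm T)\<^sup>2"
    using wsize_sqrt_add_sq_le by blast
  have "wsize P (\<lambda>j. sqrt (U' j)) x \<le> C * a + wsize P (\<lambda>j. sqrt (V j)) x * (1 + b)"
    if V: "\<And>j. 0 \<le> V j" and "0 \<le> a" "0 \<le> b" "\<And>j. 0 \<le> U' j" "\<And>j. U' j \<le> a + V j * (1 + b)"
    for x V U' a b
  proof -
    define S where "S = (\<lambda>j. sqrt (V j) * sqrt (1 + b))"
    have "wsize P (\<lambda>j. sqrt (U' j)) x \<le> wsize P (\<lambda>j. sqrt ((S j)\<^sup>2 + (sqrt a)\<^sup>2)) x"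
      using that by (intro wsize_mono) (simp add: S_def power_mult_distrib add.commute)
    also have "\<dots> \<le> wsize P S x + C * a"
      using C[where T = "\<lambda>_. sqrt a"] \<open>0 \<le> a\<close> by (simp add: dnorm_const)
    also have "wsize P S x \<le> wsize P (\<lambda>j. sqrt (V j)) x * (1 + b)"
      using wsize_mult_sqrt_le[of "\<lambda>_. b"] \<open>0 \<le> b\<close> by (simp add: S_def dnorm_const)
    finally show ?thesis by simp
  qed
  then show ?thesis using that by blast
qed

lemma wsize_sqrt_le_wsize_U:
  fixes P :: "('i, 'j::finite) span_program"
  obtains c1' c2' where "\<And>lam U x U'. compl_pos P U \<Longrightarrow> (\<And>j. 0 \<le> U' j) \<Longrightarrow>
    (\<And>j. U' j \<le> c1 + Utilde P U x j * (1 + c2 * \<bar>lam\<bar> * maxU P U)) \<Longrightarrow>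
    wsize P (\<lambda>j. sqrt (U' j)) x \<le> c1' + wsize_U P U x * (1 + c2' * \<bar>lam\<bar> * maxU P U)"
proof -
  obtain C where C: "\<And>x V U' a b. (\<And>j. 0 \<le> V j) \<Longrightarrow> 0 \<le> a \<Longrightarrow> 0 \<le> b \<Longrightarrow> (\<And>j. 0 \<le> U' j) \<Longrightarrow>
      (\<And>j. U' j \<le> a + V j * (1 + b)) \<Longrightarrow>
      wsize P (\<lambda>j. sqrt (U' j)) x \<le> C * a + wsize P (\<lambda>j. sqrt (V j)) x * (1 + b)"
    using wsize_sqrt_le_affine_bound by blast
  have "wsize P (\<lambda>j. sqrt (U' j)) x \<le> C * max c1 0 + wsize_U P U x * (1 + max c2 0 * \<bar>lam\<bar> * maxU P U)"
    if U: "compl_pos P U" "\<And>j. 0 \<le> U' j"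
      "\<And>j. U' j \<le> c1 + Utilde P U x j * (1 + c2 * \<bar>lam\<bar> * maxU P U)" for lam U x U'
  proof -
    define b where "b = max c2 0 * \<bar>lam\<bar> * maxU P U"
    have "0 \<le> b" using maxU_nonneg[of P U] by (simp add: b_def)
    have Ut: "0 \<le> Utilde P U x j" for j using U(1) by (rule Utilde_nonneg)
    have bound: "U' j \<le> max c1 0 + Utilde P U x j * (1 + b)" for j
    proof -
      have "c2 * \<bar>lam\<bar> * maxU P U \<le> b"
        unfolding b_def using maxU_nonneg[of P U] by (intro mult_right_mono) auto
      then have "Utilde P U x j * (1 + c2 * \<bar>lam\<bar> * maxU P U) \<le> Utilde P U x j * (1 + b)"
        using Ut[of j] by (intro mult_left_mono) auto
      then show ?thesis using U(3)[of j] by linarith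
    qed
    show ?thesis
      unfolding wsize_U_def b_def[symmetric] by (rule C[OF Ut _ \<open>0 \<le> b\<close> U(2) bound]) simp
  qed
  then show ?thesis using that by blast
qed

theorem lemmaA6:
  fixes P :: "('i, 'j::finite) span_program"
  assumes "sp_wf P"
  shows
    "(\<forall>x S T. posdiag S \<and> posdiag T \<longrightarrow>
        wsize P (\<lambda>j. S j * sqrt (1 + T j)) x \<le> wsize P S x * (1 + dnorm T))
   \<and> (\<exists>C. \<forall>x S T. posdiag S \<and> posdiag T \<longrightarrow>
        wsize P (\<lambda>j. sqrt ((S j)\<^sup>2 + (T j)\<^sup>2)) x \<le> wsize P S x + C * (dnorm T)\<^sup>2)
   \<and> (\<forall>c1 c2 :: real. \<exists>c1' c2' :: real. \<forall>(lam::real) U x U'.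
        compl_pos P U \<and> (\<forall>j. 0 < U' j) \<and>
        (\<forall>j. U' j \<le> c1 + Utilde P U x j * (1 + c2 * \<bar>lam\<bar> * maxU P U)) \<longrightarrow>
        wsize P (\<lambda>j. sqrt (U' j)) x \<le> c1' + wsize_U P U x * (1 + c2' * \<bar>lam\<bar> * maxU P U))"
proof (intro conjI allI impI)
  show "wsize P (\<lambda>j. S j * sqrt (1 + T j)) x \<le> wsize P S x * (1 + dnorm T)"
    if "posdiag S \<and> posdiag T" for S T and x :: "'i \<Rightarrow> bool"
    using that by (intro wsize_mult_sqrt_le) (simp add: posdiag_def less_imp_le)
  obtain C where "\<And>x S T. wsize P (\<lambda>j. sqrt ((S j)\<^sup>2 + (T j)\<^sup>2)) x \<le> wsize P S x + C * (dnorm T)\<^sup>2"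
    using wsize_sqrt_add_sq_le by blast
  then show "\<exists>C. \<forall>x S T. posdiag S \<and> posdiag T \<longrightarrow>
      wsize P (\<lambda>j. sqrt ((S j)\<^sup>2 + (T j)\<^sup>2)) x \<le> wsize P S x + C * (dnorm T)\<^sup>2"
    by blast
  fix c1 c2 :: real
  obtain c1' c2' where "\<And>lam U x U'. compl_pos P U \<Longrightarrow> (\<And>j. 0 \<le> U' j) \<Longrightarrow>
      (\<And>j. U' j \<le> c1 + Utilde P U x j * (1 + c2 * \<bar>lam\<bar> * maxU P U)) \<Longrightarrow>
      wsize P (\<lambda>j. sqrt (U' j)) x \<le> c1' + wsize_U P U x * (1 + c2' * \<bar>lam\<bar> * maxU P U)"
    using wsize_sqrt_le_wsize_U by blast
  then show "\<exists>c1' c2' :: real. \<forall>(lam::real) U x U'.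
        compl_pos P U \<and> (\<forall>j. 0 < U' j) \<and>
        (\<forall>j. U' j \<le> c1 + Utilde P U x j * (1 + c2 * \<bar>lam\<bar> * maxU P U)) \<longrightarrow>
        wsize P (\<lambda>j. sqrt (U' j)) x \<le> c1' + wsize_U P U x * (1 + c2' * \<bar>lam\<bar> * maxU P U)"
    by (meson less_imp_le)
qed

end
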